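(* Assume Assumption A holds. Let $\pi$ be any state-independent dispatch policy. Then the long-run fraction of dropped demand under $\pi$ in the $K$-th system satisfies $P^{K,\pi}=\Omega(1/K^2)$ as $K\to\infty$. In particular, $\gamma_{\mathrm o}(\pi)=-\liminf_{K\to\infty}\frac1K\log P^{K,\pi}=0$.
   Context: Model. $V_S=\{1,\dots,n\}$ (supply locations), $V_D$ (demand locations), and a bipartite compatibility graph $G=(V_S\cup V_D,E)$ with $\partial(j')=\{i\in V_S:(i,j')\in E\}$. The arrival matrix $\phi=(\phi_{j'k})_{j'\in V_D,k\in V_S}$ is nonnegative with entries summing to $1$. The $K$-th system has $K$ supply units. In each slot $t=1,2,\dots$ one customer arrives, with origin/destination $(o[t],d[t])=(j',k)$ with probability $\phi_{j'k}$, i.i.d. over slots. The state $\mathbf X^K[t]\in\{x\in\mathbb Z_{\ge0}^n:\sum_ix_i=K\}$ counts the units at each location. If a customer is served from $i$, then one unit moves from $i$ to $d[t]$; otherwise the customer is dropped and the state is unchanged. State-independent policy: $\pi$ assigns to each $j'\in V_D$, $k\in V_S$ and $t\in\mathbb N$ a probability distribution $u_{j'k}[t]$ on $\partial(j')\cup\{\emptyset\}$. A customer of type $(j',k)$ arriving at time $t$ is served from $i$ drawn from $u_{j'k}[t]$, independently of the state and the history. If $i=\emptyset$, or if location $i$ currently has no supply, the customer is dropped. $P^{K,\pi}$ denotes the long-run average fraction of customers dropped, minimized over initial states (the optimistic measure). Its exponent is $\gamma_{\mathrm o}(\pi)=-\liminf_K\frac1K\log P^{K,\pi}$. Assumption A: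 there exist $j'\in V_D$ and $k\notin\partial(j')$ with $\phi_{j'k}>0$. *)

theory Defs
  imports "HOL-Probability.Probability" "HOL-Library.Landau_Symbols"
begin

text \<open>Supply locations are the elements of a finite type 's (V_S = UNIV),
demand locations the elements of a finite type 'd (V_D = UNIV).
The arrival matrix phi is a pmf on 'd \<times> 's: phi_{j'k} = pmf phi (j', k).
A dispatch decision is an 's option: None stands for the empty choice.\<close>

definition nbhd :: "('s \<times> 'd) set \<Rightarrow> 'd \<Rightarrow> 's set" where
  "nbhd E j' = {i. (i, j') \<in> E}"

definition states :: "nat \<Rightarrow> ('s::finite \<Rightarrow> nat) set" where
  "states K = {x. (\<Sum>i\<in>UNIV. x i) = K}"

definition state_indep_policy ::
  "('s \<times> 'd) set \<Rightarrow> ('d \<Rightarrow> 's \<Rightarrow> nat \<Rightarrow> 's option pmf) \<Rightarrow> bool" where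
  "state_indep_policy E u \<longleftrightarrow>
     (\<forall>j' k t. set_pmf (u j' k t) \<subseteq> insert None (Some ` nbhd E j'))"

text \<open>Joint distribution of (origin, destination, chosen location) at slot t.\<close>
definition slot_pmf ::
  "('d \<times> 's) pmf \<Rightarrow> ('d \<Rightarrow> 's \<Rightarrow> nat \<Rightarrow> 's option pmf) \<Rightarrow> nat \<Rightarrow> ('d \<times> 's \<times> 's option) pmf" where
  "slot_pmf phi u t = bind_pmf phi (\<lambda>(j', k). map_pmf (\<lambda>i. (j', k, i)) (u j' k t))"

definition dropped :: "('s \<Rightarrow> nat) \<Rightarrow> ('d \<times> 's \<times> 's option) \<Rightarrow> bool" where
  "dropped x c = (case snd (snd c) of None \<Rightarrow> True | Some i \<Rightarrow> x i = 0)"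

definition next_state :: "('s \<Rightarrow> nat) \<Rightarrow> ('d \<times> 's \<times> 's option) \<Rightarrow> ('s \<Rightarrow> nat)" where
  "next_state x c = (if dropped x c then x else
     (case c of (j', k, Some i) \<Rightarrow>
        (\<lambda>l. x l - (if l = i then 1 else 0) + (if l = k then 1 else 0))
      | _ \<Rightarrow> x))"

text \<open>state_dist phi u x0 m is the distribution of the state X[m+1] at the beginning
 of slot m+1, given X[1] = x0.\<close>
primrec state_dist ::
  "('d \<times> 's) pmf \<Rightarrow> ('d \<Rightarrow> 's \<Rightarrow> nat \<Rightarrow> 's option pmf) \<Rightarrow> ('s \<Rightarrow> nat) \<Rightarrow> nat \<Rightarrow> ('s \<Rightarrow> nat) pmf" where
  "state_dist phi u x0 0 = return_pmf x0"
| "state_dist phi u x0 (Suc m) =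
     bind_pmf (state_dist phi u x0 m)
       (\<lambda>x. map_pmf (next_state x) (slot_pmf phi u (Suc m)))"

text \<open>Probability that the customer arriving in slot t (t \<ge> 1) is dropped.\<close>
definition drop_prob ::
  "('d \<times> 's) pmf \<Rightarrow> ('d \<Rightarrow> 's \<Rightarrow> nat \<Rightarrow> 's option pmf) \<Rightarrow> ('s \<Rightarrow> nat) \<Rightarrow> nat \<Rightarrow> real" where
  "drop_prob phi u x0 t =
     measure_pmf.prob
       (bind_pmf (state_dist phi u x0 (t - 1))
          (\<lambda>x. map_pmf (dropped x) (slot_pmf phi u t))) {True}"

definition long_run_drop ::
  "('d \<times> 's) pmf \<Rightarrow> ('d \<Rightarrow> 's \<Rightarrow> nat \<Rightarrow> 's option pmf) \<Rightarrow> ('s \<Rightarrow> nat) \<Rightarrow> ereal" where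
  "long_run_drop phi u x0 =
     Liminf sequentially (\<lambda>T. ereal ((\<Sum>t=1..T. drop_prob phi u x0 t) / real T))"

definition P_drop ::
  "('d \<times> 's::finite) pmf \<Rightarrow> ('d \<Rightarrow> 's \<Rightarrow> nat \<Rightarrow> 's option pmf) \<Rightarrow> nat \<Rightarrow> real" where
  "P_drop phi u K = real_of_ereal (INF x0\<in>states K. long_run_drop phi u x0)"

definition assumption_A :: "('s \<times> 'd) set \<Rightarrow> ('d \<times> 's) pmf \<Rightarrow> bool" where
  "assumption_A E phi \<longleftrightarrow> (\<exists>j' k. k \<notin> nbhd E j' \<and> pmf phi (j', k) > 0)"

end

theory Submission
  imports Defs
begin

text \<open>Follow the supply \<open>Y\<close> at a location k0 that cannot serve the origin j0 of customers
travelling to k0. Every served customer changes \<open>Y\<close> by -1, 0 or 1. As dispatch ignores the state,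
the state and the outcome of a slot are independent, so the covariance of \<open>Y\<close> with its increment
comes only from dropped customers and is at most K times the drop probability. Each slot adds at
least p(1 - q) minus the drop probability to the variance of \<open>Y\<close>, where p is the rate of the
(j0, k0) customers and q the probability that a customer travels to k0; since the variance of
\<open>Y\<close> stays below K^2, over T slots T p (1 - q) is at most K^2 plus 2K + 1 times the expected
number of drops. When q = 1 the supply at k0 never decreases and its mean gives the same kind of
bound. Hence the long-run drop rate is at least c / (2K + 1), which is \<Omega>(1/K^2) and has
exponent 0.\<close>

section \<open>Finite distributions\<close>

lemma integral_pair_pmf_mult:
  fixes f :: "'a \<Rightarrow> real" and g :: "'b \<Rightarrow> real"
  assumes "finite (set_pmf p)" "finite (set_pmf q)"
  shows "(\<integral>z. f (fst z) * g (snd z) \<partial>pair_pmf p q) = (\<integral>x. f x \<partial>p) * (\<integral>y. g y \<partial>q)"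
proof -
  have "(\<integral>z. f (fst z) * g (snd z) \<partial>pair_pmf p q)
      = (\<Sum>(x, y)\<in>set_pmf p \<times> set_pmf q. f x * pmf p x * (g y * pmf q y))"
    using assms by (subst integral_measure_pmf_real[of "set_pmf p \<times> set_pmf q"])
      (auto simp: pmf_pair case_prod_beta mult_ac intro!: sum.cong)
  also have "\<dots> = (\<integral>x. f x \<partial>p) * (\<integral>y. g y \<partial>q)"
    using assms by (simp add: integral_measure_pmf_real sum_product sum.cartesian_product)
  finally show ?thesis .
qed

lemma variance_pair_pmf_fst:
  fixes f :: "'a \<Rightarrow> real"
  shows "measure_pmf.variance (pair_pmf p q) (\<lambda>z. f (fst z)) = measure_pmf.variance p f"
  using expectation_pair_pmf_fst[of p q "\<lambda>x. (f x - measure_pmf.expectation p f)\<^sup>2"]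
  by (simp add: expectation_pair_pmf_fst[of p q f])

lemma variance_pmf_eq:
  fixes X :: "'a \<Rightarrow> real"
  assumes "finite (set_pmf M)"
  shows "measure_pmf.variance M X = measure_pmf.expectation M (\<lambda>z. (X z)\<^sup>2) - (measure_pmf.expectation M X)\<^sup>2"
  using assms by (simp add: power2_diff integrable_measure_pmf_finite Bochner_Integration.integral_diff
     Bochner_Integration.integral_add algebra_simps power2_eq_square)

lemma variance_add_pmf:
  fixes X Y :: "'a \<Rightarrow> real"
  assumes "finite (set_pmf M)"
  shows "measure_pmf.variance M (\<lambda>z. X z + Y z) = measure_pmf.variance M X
    + 2 * measure_pmf.expectation M (\<lambda>z. (X z - measure_pmf.expectation M X) * Y z)
    + measure_pmf.variance M Y"
proof -
  note int = integrable_measure_pmf_finite[OF assms]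
  let ?E = "measure_pmf.expectation M"
  have sq: "?E (\<lambda>z. (X z + Y z)\<^sup>2) = ?E (\<lambda>z. (X z)\<^sup>2) + 2 * ?E (\<lambda>z. X z * Y z) + ?E (\<lambda>z. (Y z)\<^sup>2)"
    by (simp add: power2_sum int mult.assoc)
  have cov: "?E (\<lambda>z. (X z - ?E X) * Y z) = ?E (\<lambda>z. X z * Y z) - ?E X * ?E Y"
    by (simp add: left_diff_distrib int)
  show ?thesis
    unfolding variance_pmf_eq[OF assms] sq cov by (simp add: int power2_sum algebra_simps)
qed

lemma centered_abs_le_pmf:
  fixes X :: "'a \<Rightarrow> real"
  assumes "finite (set_pmf M)" and bnd: "\<And>z. z \<in> set_pmf M \<Longrightarrow> 0 \<le> X z \<and> X z \<le> K"
    and "z \<in> set_pmf M"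
  shows "\<bar>X z - measure_pmf.expectation M X\<bar> \<le> K"
proof -
  have "0 \<le> measure_pmf.expectation M X" "measure_pmf.expectation M X \<le> K"
    using bnd assms(1) by (auto intro!: measure_pmf.integral_ge_const measure_pmf.integral_le_const
        simp: AE_measure_pmf_iff integrable_measure_pmf_finite)
  then show ?thesis
    using bnd[OF \<open>z \<in> set_pmf M\<close>] unfolding abs_le_iff by simp
qed

lemma centered_product_abs_le_pmf:
  fixes X Y :: "'a \<Rightarrow> real"
  assumes fin: "finite (set_pmf M)" and "\<And>z. z \<in> set_pmf M \<Longrightarrow> 0 \<le> X z \<and> X z \<le> K"
  shows "\<bar>measure_pmf.expectation M (\<lambda>z. (X z - measure_pmf.expectation M X) * Y z)\<bar>
    \<le> K * measure_pmf.expectation M (\<lambda>z. \<bar>Y z\<bar>)"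
proof -
  note int = integrable_measure_pmf_finite[OF fin]
  have "\<bar>measure_pmf.expectation M (\<lambda>z. (X z - measure_pmf.expectation M X) * Y z)\<bar>
      \<le> measure_pmf.expectation M (\<lambda>z. \<bar>(X z - measure_pmf.expectation M X) * Y z\<bar>)"
    by (rule integral_abs_bound)
  also have "\<dots> \<le> measure_pmf.expectation M (\<lambda>z. K * \<bar>Y z\<bar>)"
    using centered_abs_le_pmf[OF assms]
    by (intro integral_mono_AE) (auto simp: AE_measure_pmf_iff int abs_mult intro!: mult_right_mono)
  finally show ?thesis by simp
qed

lemma variance_le_square_pmf:
  fixes X :: "'a \<Rightarrow> real"
  assumes fin: "finite (set_pmf M)" and "\<And>z. z \<in> set_pmf M \<Longrightarrow> 0 \<le> X z \<and> X z \<le> K"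
  shows "measure_pmf.variance M X \<le> K\<^sup>2"
proof -
  obtain z where "z \<in> set_pmf M" using set_pmf_not_empty[of M] by blast
  then have "0 \<le> K" using assms(2) by force
  then have "measure_pmf.variance M X \<le> measure_pmf.expectation M (\<lambda>_. K\<^sup>2)"
    using centered_abs_le_pmf[OF assms] fin
    by (intro integral_mono_AE)
      (auto simp: AE_measure_pmf_iff integrable_measure_pmf_finite abs_le_square_iff[symmetric])
  then show ?thesis by simp
qed

lemma
  fixes Z :: "'a \<Rightarrow> real"
  assumes fin: "finite (set_pmf M)" and val: "\<And>z. z \<in> set_pmf M \<Longrightarrow> Z z \<in> {-1, 0, 1}"
  shows expectation_trinary_pmf:
      "measure_pmf.expectation M Z = measure_pmf.prob M {z. Z z = 1} - measure_pmf.prob M {z. Z z = -1}"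
    and variance_trinary_pmf_ge:
      "measure_pmf.prob M {z. Z z = 1} * (1 - measure_pmf.prob M {z. Z z = 1}) \<le> measure_pmf.variance M Z"
proof -
  define A where "A = measure_pmf.prob M {z. Z z = 1}"
  define B where "B = measure_pmf.prob M {z. Z z = -1}"
  note int = integrable_measure_pmf_finite[OF fin]
  have "measure_pmf.expectation M Z
      = measure_pmf.expectation M (\<lambda>z. indicator {z. Z z = 1} z - indicator {z. Z z = -1} z)"
    using val by (intro integral_cong_AE) (auto simp: AE_measure_pmf_iff indicator_def)
  then show EZ: "measure_pmf.expectation M Z = A - B"
    by (simp add: A_def B_def int measure_pmf.emeasure_eq_measure)
  have "measure_pmf.expectation M (\<lambda>z. (Z z)\<^sup>2)
      = measure_pmf.expectation M (\<lambda>z. indicator {z. Z z = 1} z + indicator {z. Z z = -1} z)"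
    using val by (intro integral_cong_AE) (auto simp: AE_measure_pmf_iff indicator_def)
  then have EZ2: "measure_pmf.expectation M (\<lambda>z. (Z z)\<^sup>2) = A + B"
    by (simp add: A_def B_def int measure_pmf.emeasure_eq_measure)
  have "B \<le> 1" "0 \<le> A" "0 \<le> B" unfolding A_def B_def by simp_all
  then have "A * (1 - A) \<le> A + B - (A - B)\<^sup>2"
    using mult_nonneg_nonneg[of B "1 + 2 * A - B"] by (simp add: power2_eq_square algebra_simps)
  then show "A * (1 - A) \<le> measure_pmf.variance M Z"
    using variance_pmf_eq[OF fin, of Z] EZ EZ2 by simp
qed

section \<open>Asymptotics\<close>

lemma Liminf_average_ge:
  fixes s :: "nat \<Rightarrow> real"
  assumes "\<And>T. a * real T - b \<le> s T"
  shows "ereal a \<le> Liminf sequentially (\<lambda>T. ereal (s T / real T))"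
proof -
  have "(\<lambda>T. ereal (a - b / real T)) \<longlonglongrightarrow> ereal (a - 0)"
    by (intro tendsto_ereal tendsto_intros)
  then have "ereal a = Liminf sequentially (\<lambda>T. ereal (a - b / real T))"
    by (intro lim_imp_Liminf[symmetric]) simp_all
  also have "\<dots> \<le> Liminf sequentially (\<lambda>T. ereal (s T / real T))"
  proof (intro Liminf_mono eventually_sequentiallyI[of 1])
    fix T :: nat
    assume "1 \<le> T"
    then have "a - b / real T = (a * real T - b) / real T"
      by (simp add: field_simps)
    also have "\<dots> \<le> s T / real T"
      using assms[of T] by (simp add: divide_right_mono)
    finally show "ereal (a - b / real T) \<le> ereal (s T / real T)" by simp
  qed
  finally show ?thesis .
qed

lemma bigomega_inverse_square_of_ge:
  fixes f :: "nat \<Rightarrow> real"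
  assumes "0 < c" and lower: "\<And>n. c / (2 * real n + 1) \<le> f n"
  shows "f \<in> \<Omega>(\<lambda>n. 1 / (real n)\<^sup>2)"
proof (rule landau_omega.bigI[of "c / 3"])
  show "0 < c / 3" using \<open>0 < c\<close> by simp
  show "\<forall>\<^sub>F n in sequentially. c / 3 * norm (1 / (real n)\<^sup>2) \<le> norm (f n)"
  proof (intro eventually_sequentiallyI[of 1])
    fix n :: nat
    assume "1 \<le> n"
    then have n: "1 \<le> real n" by simp
    then have "2 * real n + 1 \<le> 3 * (real n * 1)" by simp
    also have "\<dots> \<le> 3 * (real n)\<^sup>2"
      using n unfolding power2_eq_square by (intro mult_left_mono) simp_all
    finally have "2 * real n + 1 \<le> 3 * (real n)\<^sup>2" .
    then have "c / (3 * (real n)\<^sup>2) \<le> c / (2 * real n + 1)"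
      using \<open>0 < c\<close> n by (intro divide_left_mono) auto
    then have "c / 3 * (1 / (real n)\<^sup>2) \<le> c / (2 * real n + 1)"
      by simp
    also have "\<dots> \<le> f n" by (rule lower)
    finally show "c / 3 * norm (1 / (real n)\<^sup>2) \<le> norm (f n)" by simp
  qed
qed

lemma ln_over_n_tendsto_0_of_bounds:
  fixes f :: "nat \<Rightarrow> real"
  assumes "0 < c" and lower: "\<And>n. c / (2 * real n + 1) \<le> f n" and upper: "\<And>n. f n \<le> 1"
  shows "(\<lambda>n. ln (f n) / real n) \<longlonglongrightarrow> 0"
proof (rule tendsto_sandwich)
  show "(\<lambda>n. ln (c / 3) / real n - ln (real n) / real n) \<longlonglongrightarrow> 0"
    using tendsto_diff[OF lim_const_over_n[of "ln (c / 3)"] lim_ln_over_n] by simp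
  show "\<forall>\<^sub>F n in sequentially. ln (c / 3) / real n - ln (real n) / real n \<le> ln (f n) / real n"
  proof (intro eventually_sequentiallyI[of 1])
    fix n :: nat
    assume n: "1 \<le> n"
    have "c / (3 * real n) \<le> c / (2 * real n + 1)"
      using n \<open>0 < c\<close> by (intro divide_left_mono) auto
    then have "ln (c / (3 * real n)) \<le> ln (f n)"
      using n \<open>0 < c\<close> lower[of n] by (intro ln_mono) auto
    then show "ln (c / 3) / real n - ln (real n) / real n \<le> ln (f n) / real n"
      using n \<open>0 < c\<close> by (simp add: ln_div ln_mult diff_divide_distrib[symmetric] divide_right_mono)
  qed
  show "\<forall>\<^sub>F n in sequentially. ln (f n) / real n \<le> 0"
  proof (intro always_eventually allI)
    fix n
    have "0 < f n"
      using \<open>0 < c\<close> by (intro less_le_trans[OF _ lower[of n]]) simp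
    then show "ln (f n) / real n \<le> 0"
      using upper[of n] by (simp add: divide_nonpos_nonneg)
  qed
qed simp

section \<open>The dispatch model\<close>

lemma sum_next_state:
  fixes x :: "'s::finite \<Rightarrow> nat"
  shows "(\<Sum>i\<in>UNIV. next_state x c i) = (\<Sum>i\<in>UNIV. x i)"
proof (cases "dropped x c")
  case True
  then show ?thesis by (simp add: next_state_def)
next
  case False
  obtain j k i where c: "c = (j, k, Some i)" and "x i \<noteq> 0"
    using False by (cases c) (auto simp: dropped_def split: option.splits)
  then have "next_state x c l + of_bool (l = i) = x l + of_bool (l = k)" for l
    using False by (simp add: next_state_def)
  then have "(\<Sum>l\<in>UNIV. next_state x c l + of_bool (l = i)) = (\<Sum>l\<in>UNIV. x l + of_bool (l = k))"
    by presburger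
  then show ?thesis by (simp add: sum.distrib of_bool_def)
qed

lemma total_supply_state_dist:
  fixes x0 :: "'s::finite \<Rightarrow> nat"
  shows "x \<in> set_pmf (state_dist phi u x0 m) \<Longrightarrow> (\<Sum>i\<in>UNIV. x i) = (\<Sum>i\<in>UNIV. x0 i)"
  by (induction m arbitrary: x) (auto simp: sum_next_state)

lemma finite_set_state_dist [simp]:
  fixes phi :: "('d::finite \<times> 's::finite) pmf"
  shows "finite (set_pmf (state_dist phi u x0 m))"
  by (induction m) auto

lemma state_dist_Suc_pair_pmf:
  "state_dist phi u x0 (Suc m)
    = map_pmf (\<lambda>z. next_state (fst z) (snd z)) (pair_pmf (state_dist phi u x0 m) (slot_pmf phi u (Suc m)))"
  by (simp add: pair_pmf_def map_pmf_def bind_assoc_pmf bind_return_pmf)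

lemma drop_prob_Suc_pair_pmf:
  "drop_prob phi u x0 (Suc m)
    = measure_pmf.prob (pair_pmf (state_dist phi u x0 m) (slot_pmf phi u (Suc m))) {z. dropped (fst z) (snd z)}"
proof -
  have "bind_pmf (state_dist phi u x0 m) (\<lambda>x. map_pmf (dropped x) (slot_pmf phi u (Suc m)))
      = map_pmf (\<lambda>z. dropped (fst z) (snd z)) (pair_pmf (state_dist phi u x0 m) (slot_pmf phi u (Suc m)))"
    by (simp add: pair_pmf_def map_pmf_def bind_assoc_pmf bind_return_pmf)
  then show ?thesis by (simp add: drop_prob_def vimage_def)
qed

lemma arrivals_slot_pmf: "map_pmf (\<lambda>c. (fst c, fst (snd c))) (slot_pmf phi u t) = phi"
  by (simp add: slot_pmf_def map_bind_pmf map_pmf_comp case_prod_beta map_pmf_const bind_return_pmf')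

lemma measure_slot_pmf_arrivals:
  "measure_pmf.prob (slot_pmf phi u t) {c. P (fst c) (fst (snd c))} = measure_pmf.prob phi {(j, k). P j k}"
  using measure_map_pmf[of "\<lambda>c. (fst c, fst (snd c))" "slot_pmf phi u t" "{(j, k). P j k}"]
  by (simp add: arrivals_slot_pmf vimage_def)

lemma measure_pair_pmf_snd:
  "measure_pmf.prob (pair_pmf p q) {z. P (snd z)} = measure_pmf.prob q {y. P y}"
  using measure_map_pmf[of snd "pair_pmf p q" "{y. P y}"] by (simp add: map_snd_pair_pmf vimage_def)

section \<open>Supply at an incompatible destination\<close>

locale incompatible_destination =
  fixes E :: "('s::finite \<times> 'd::finite) set"
    and phi :: "('d \<times> 's) pmf"
    and u :: "'d \<Rightarrow> 's \<Rightarrow> nat \<Rightarrow> 's option pmf"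
    and j0 :: 'd and k0 :: 's
  assumes policy: "state_indep_policy E u"
    and incompatible: "k0 \<notin> nbhd E j0"
    and arrival_pos: "0 < pmf phi (j0, k0)"
begin

text \<open>Change of the supply at k0 caused by the decision of a slot, if its customer is served.\<close>

definition shift :: "'d \<times> 's \<times> 's option \<Rightarrow> real" where
  "shift c = (case snd (snd c) of None \<Rightarrow> 0 | Some i \<Rightarrow> of_bool (fst (snd c) = k0) - of_bool (i = k0))"

definition increment :: "('s \<Rightarrow> nat) \<times> ('d \<times> 's \<times> 's option) \<Rightarrow> real" where
  "increment z = (if dropped (fst z) (snd z) then 0 else shift (snd z))"

definition dest_prob :: real where
  "dest_prob = measure_pmf.prob phi {(j, k). k = k0}"

lemma next_state_at_k0: "real (next_state x c k0) = real (x k0) + increment (x, c)"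
  by (cases c) (auto simp: next_state_def increment_def shift_def dropped_def split: option.splits)

lemma increment_trinary: "increment z \<in> {-1, 0, 1}"
  by (auto simp: increment_def shift_def split: option.splits)

lemma dest_of_increment_eq_1: "increment z = 1 \<Longrightarrow> fst (snd (snd z)) = k0"
  by (auto simp: increment_def shift_def of_bool_def split: option.splits if_splits)

lemma dest_of_increment_eq_neg1: "increment z = -1 \<Longrightarrow> fst (snd (snd z)) \<noteq> k0"
  by (auto simp: increment_def shift_def of_bool_def split: option.splits if_splits)

lemma abs_increment_diff_shift: "\<bar>increment z - shift (snd z)\<bar> \<le> of_bool (dropped (fst z) (snd z))"
  by (auto simp: increment_def shift_def split: option.splits)

lemma incompatible_arrival_moves_to_k0_or_drops:
  assumes "c \<in> set_pmf (slot_pmf phi u t)" and "(fst c, fst (snd c)) = (j0, k0)"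
  shows "increment (x, c) = 1 \<or> dropped x c"
proof -
  obtain i where c: "c = (j0, k0, i)" and "i \<in> set_pmf (u j0 k0 t)"
    using assms by (auto simp: slot_pmf_def)
  then have "i \<in> insert None (Some ` nbhd E j0)"
    using policy by (auto simp: state_indep_policy_def)
  then show ?thesis
    using incompatible by (auto simp: c increment_def shift_def dropped_def)
qed

lemma dest_prob_le_1: "dest_prob \<le> 1"
  by (simp add: dest_prob_def)

context
  fixes K :: nat and x0 :: "'s \<Rightarrow> nat"
  assumes initial: "x0 \<in> states K"
begin

text \<open>The state before slot m + 1 and the outcome of that slot are independent.\<close>

abbreviation joint :: "nat \<Rightarrow> (('s \<Rightarrow> nat) \<times> ('d \<times> 's \<times> 's option)) pmf" where
  "joint m \<equiv> pair_pmf (state_dist phi u x0 m) (slot_pmf phi u (Suc m))"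

lemma finite_set_joint: "finite (set_pmf (joint m))"
  by simp

lemma level_bounds_state_dist:
  "x \<in> set_pmf (state_dist phi u x0 m) \<Longrightarrow> 0 \<le> real (x k0) \<and> real (x k0) \<le> real K"
  using total_supply_state_dist[of x phi u x0 m] member_le_sum[of k0 UNIV x] initial
  by (simp add: states_def)

lemma level_bounds_joint:
  "z \<in> set_pmf (joint m) \<Longrightarrow> 0 \<le> real (fst z k0) \<and> real (fst z k0) \<le> real K"
  by (auto dest: level_bounds_state_dist)

lemma variance_level_Suc:
  "measure_pmf.variance (state_dist phi u x0 (Suc m)) (\<lambda>x. real (x k0))
    = measure_pmf.variance (joint m) (\<lambda>z. real (fst z k0) + increment z)"
  unfolding state_dist_Suc_pair_pmf by (simp add: next_state_at_k0)

lemma covariance_level_increment_ge: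
  "- real K * drop_prob phi u x0 (Suc m)
    \<le> measure_pmf.expectation (joint m)
         (\<lambda>z. (real (fst z k0) - measure_pmf.expectation (joint m) (\<lambda>z. real (fst z k0))) * increment z)"
proof -
  let ?E = "measure_pmf.expectation (joint m)"
  let ?Y = "\<lambda>z. real (fst z k0) - ?E (\<lambda>z. real (fst z k0))"
  note int = integrable_measure_pmf_finite[OF finite_set_joint]
  \<comment> \<open>shift depends on the slot outcome only; increment differs from it only on drops\<close>
  have "?E (\<lambda>z. ?Y z * shift (snd z))
      = measure_pmf.expectation (state_dist phi u x0 m) (\<lambda>x. real (x k0) - ?E (\<lambda>z. real (fst z k0)))
        * measure_pmf.expectation (slot_pmf phi u (Suc m)) shift"
    by (rule integral_pair_pmf_mult) simp_all
  then have independent: "?E (\<lambda>z. ?Y z * shift (snd z)) = 0"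
    by (simp add: integrable_measure_pmf_finite expectation_pair_pmf_fst[where f = "\<lambda>x. real (x k0)"])
  have "\<bar>?E (\<lambda>z. ?Y z * (increment z - shift (snd z)))\<bar> \<le> real K * ?E (\<lambda>z. \<bar>increment z - shift (snd z)\<bar>)"
    by (rule centered_product_abs_le_pmf[OF finite_set_joint level_bounds_joint])
  also have "\<dots> \<le> real K * ?E (indicator {z. dropped (fst z) (snd z)})"
    using abs_increment_diff_shift
    by (intro mult_left_mono integral_mono) (auto simp: int indicator_def)
  also have "\<dots> = real K * drop_prob phi u x0 (Suc m)"
    by (simp add: drop_prob_Suc_pair_pmf measure_pmf.emeasure_eq_measure)
  finally have "- real K * drop_prob phi u x0 (Suc m) \<le> ?E (\<lambda>z. ?Y z * (increment z - shift (snd z)))"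
    by linarith
  also have "\<dots> = ?E (\<lambda>z. ?Y z * increment z)"
    using independent by (simp add: int right_diff_distrib)
  finally show ?thesis .
qed

lemma variance_increment_le:
  "measure_pmf.variance (joint m) increment
    \<le> measure_pmf.variance (state_dist phi u x0 (Suc m)) (\<lambda>x. real (x k0))
      - measure_pmf.variance (state_dist phi u x0 m) (\<lambda>x. real (x k0))
      + 2 * real K * drop_prob phi u x0 (Suc m)"
  using covariance_level_increment_ge[of m]
  unfolding variance_level_Suc variance_add_pmf[OF finite_set_joint]
  by (simp add: variance_pair_pmf_fst[where f = "\<lambda>x. real (x k0)"])

lemma prob_gain_le_dest_prob: "measure_pmf.prob (joint m) {z. increment z = 1} \<le> dest_prob"
proof -
  have "measure_pmf.prob (joint m) {z. increment z = 1} \<le> measure_pmf.prob (joint m) {z. fst (snd (snd z)) = k0}"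
    by (intro measure_pmf.finite_measure_mono) (auto dest: dest_of_increment_eq_1)
  also have "\<dots> = dest_prob"
    unfolding measure_pair_pmf_snd[where P = "\<lambda>c. fst (snd c) = k0"]
      measure_slot_pmf_arrivals[where P = "\<lambda>j k. k = k0"] dest_prob_def ..
  finally show ?thesis .
qed

lemma prob_loss_le: "measure_pmf.prob (joint m) {z. increment z = -1} \<le> 1 - dest_prob"
proof -
  have "measure_pmf.prob (joint m) {z. increment z = -1} \<le> measure_pmf.prob (joint m) {z. fst (snd (snd z)) \<noteq> k0}"
    using dest_of_increment_eq_neg1 by (intro measure_pmf.finite_measure_mono) fastforce+
  also have "\<dots> = measure_pmf.prob phi (UNIV - {(j, k). k = k0})"
    unfolding measure_pair_pmf_snd[where P = "\<lambda>c. fst (snd c) \<noteq> k0"]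
      measure_slot_pmf_arrivals[where P = "\<lambda>j k. k \<noteq> k0"]
    by (simp add: set_diff_eq case_prod_unfold)
  also have "\<dots> = 1 - dest_prob"
    using measure_pmf.prob_compl[of "{(j, k). k = k0}" phi] by (simp add: dest_prob_def)
  finally show ?thesis .
qed

lemma arrival_le_gain_plus_drop:
  "pmf phi (j0, k0) \<le> measure_pmf.prob (joint m) {z. increment z = 1} + drop_prob phi u x0 (Suc m)"
proof -
  let ?A = "{z. (fst (snd z), fst (snd (snd z))) = (j0, k0)}"
  have "measure_pmf.prob (joint m) ?A = pmf phi (j0, k0)"
    unfolding measure_pair_pmf_snd[where P = "\<lambda>c. (fst c, fst (snd c)) = (j0, k0)"]
      measure_slot_pmf_arrivals[where P = "\<lambda>j k. (j, k) = (j0, k0)"]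
    by (simp add: measure_pmf_single)
  then have "pmf phi (j0, k0) = measure_pmf.prob (joint m) (?A \<inter> set_pmf (joint m))"
    by (simp only: measure_Int_set_pmf)
  also have "\<dots> \<le> measure_pmf.prob (joint m) ({z. increment z = 1} \<union> {z. dropped (fst z) (snd z)})"
    using incompatible_arrival_moves_to_k0_or_drops
    by (intro measure_pmf.finite_measure_mono) force+
  also have "\<dots> \<le> measure_pmf.prob (joint m) {z. increment z = 1} + drop_prob phi u x0 (Suc m)"
    unfolding drop_prob_Suc_pair_pmf by (rule measure_subadditive) simp_all
  finally show ?thesis .
qed

lemma variance_increment_ge:
  "pmf phi (j0, k0) * (1 - dest_prob) - drop_prob phi u x0 (Suc m) \<le> measure_pmf.variance (joint m) increment"
proof -
  define g where "g = measure_pmf.prob (joint m) {z. increment z = 1}"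
  define D where "D = drop_prob phi u x0 (Suc m)"
  have "0 \<le> D" "0 \<le> 1 - dest_prob"
    using dest_prob_le_1 by (simp_all add: D_def drop_prob_def)
  then have "pmf phi (j0, k0) * (1 - dest_prob) - D \<le> (pmf phi (j0, k0) - D) * (1 - dest_prob)"
    by (simp add: algebra_simps mult_left_le_one_le dest_prob_def)
  also have "\<dots> \<le> g * (1 - dest_prob)"
    using arrival_le_gain_plus_drop[of m] \<open>0 \<le> 1 - dest_prob\<close>
    unfolding g_def D_def by (intro mult_right_mono) simp_all
  finally have "pmf phi (j0, k0) * (1 - dest_prob) - drop_prob phi u x0 (Suc m) \<le> g * (1 - dest_prob)"
    unfolding D_def .
  also have "\<dots> \<le> g * (1 - g)"
    using prob_gain_le_dest_prob[of m] by (simp add: g_def mult_left_mono)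
  also have "\<dots> \<le> measure_pmf.variance (joint m) increment"
    unfolding g_def by (rule variance_trinary_pmf_ge[OF finite_set_joint increment_trinary])
  finally show ?thesis .
qed

lemma mean_level_Suc:
  "measure_pmf.expectation (state_dist phi u x0 (Suc m)) (\<lambda>x. real (x k0))
    = measure_pmf.expectation (state_dist phi u x0 m) (\<lambda>x. real (x k0))
      + measure_pmf.prob (joint m) {z. increment z = 1} - measure_pmf.prob (joint m) {z. increment z = -1}"
  unfolding state_dist_Suc_pair_pmf
  using expectation_trinary_pmf[OF finite_set_joint increment_trinary, of m]
  by (simp add: next_state_at_k0 integrable_measure_pmf_finite
      expectation_pair_pmf_fst[where f = "\<lambda>x. real (x k0)"])

lemma drop_sum_ge_by_variance:
  "pmf phi (j0, k0) * (1 - dest_prob) * real T - (real K)\<^sup>2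
    \<le> (2 * real K + 1) * (\<Sum>m<T. drop_prob phi u x0 (Suc m))"
proof -
  define V where "V m = measure_pmf.variance (state_dist phi u x0 m) (\<lambda>x. real (x k0))" for m
  define D where "D m = drop_prob phi u x0 (Suc m)" for m
  have "(\<Sum>m<T. pmf phi (j0, k0) * (1 - dest_prob) - D m) \<le> (\<Sum>m<T. V (Suc m) - V m + 2 * real K * D m)"
    unfolding V_def D_def by (intro sum_mono order.trans[OF variance_increment_ge variance_increment_le])
  also have "\<dots> = V T - V 0 + 2 * real K * (\<Sum>m<T. D m)"
    by (simp add: sum.distrib sum_lessThan_telescope sum_distrib_left)
  also have "\<dots> \<le> (real K)\<^sup>2 + 2 * real K * (\<Sum>m<T. D m)"
    using variance_le_square_pmf[OF finite_set_state_dist[of phi u x0 T] level_bounds_state_dist]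
    by (simp add: V_def)
  finally have "pmf phi (j0, k0) * (1 - dest_prob) * real T - (\<Sum>m<T. D m)
      \<le> (real K)\<^sup>2 + 2 * real K * (\<Sum>m<T. D m)"
    by (simp add: sum_subtractf mult.commute)
  then show ?thesis
    unfolding D_def by (simp add: algebra_simps del: sum_distrib_left)
qed

lemma drop_sum_ge_by_mean:
  assumes "dest_prob = 1"
  shows "pmf phi (j0, k0) * real T - real K \<le> (\<Sum>m<T. drop_prob phi u x0 (Suc m))"
proof -
  define M where "M m = measure_pmf.expectation (state_dist phi u x0 m) (\<lambda>x. real (x k0))" for m
  define gain where "gain m = measure_pmf.prob (joint m) {z. increment z = 1}" for m
  have "measure_pmf.prob (joint m) {z. increment z = -1} = 0" for m
    using prob_loss_le[of m] assms by (simp add: measure_le_0_iff)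
  then have "M (Suc m) = M m + gain m" for m
    using mean_level_Suc by (simp add: M_def gain_def)
  then have "(\<Sum>m<T. gain m) = M T - M 0"
    by (simp add: sum_lessThan_telescope[of M, symmetric])
  also have "\<dots> \<le> real K"
  proof -
    have "0 \<le> M 0" "M T \<le> real K"
      using level_bounds_state_dist unfolding M_def
      by (auto intro!: measure_pmf.integral_ge_const measure_pmf.integral_le_const
          simp: AE_measure_pmf_iff integrable_measure_pmf_finite)
    then show ?thesis by simp
  qed
  finally have "(\<Sum>m<T. gain m) \<le> real K" .
  moreover have "(\<Sum>m<T. pmf phi (j0, k0) - drop_prob phi u x0 (Suc m)) \<le> (\<Sum>m<T. gain m)"
    using arrival_le_gain_plus_drop by (intro sum_mono) (simp add: gain_def algebra_simps)
  ultimately show ?thesis by (simp add: sum_subtractf mult.commute)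
qed

end

lemma drop_sum_lower_bound:
  obtains c where "0 < c" and "\<And>K x0 T. x0 \<in> states K \<Longrightarrow>
    c * real T - (real K)\<^sup>2 \<le> (2 * real K + 1) * (\<Sum>m<T. drop_prob phi u x0 (Suc m))"
proof (cases "dest_prob < 1")
  case True
  then show ?thesis
    using that[of "pmf phi (j0, k0) * (1 - dest_prob)"] arrival_pos drop_sum_ge_by_variance by simp
next
  case False
  then have "dest_prob = 1" using dest_prob_le_1 by simp
  have "pmf phi (j0, k0) * real T - (real K)\<^sup>2 \<le> (2 * real K + 1) * (\<Sum>m<T. drop_prob phi u x0 (Suc m))"
    if "x0 \<in> states K" for K x0 T
  proof -
    define S where "S = (\<Sum>m<T. drop_prob phi u x0 (Suc m))"
    have "S \<le> (2 * real K + 1) * S"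
      using sum_nonneg[of "{..<T}" "\<lambda>m. drop_prob phi u x0 (Suc m)"]
      by (simp add: S_def drop_prob_def algebra_simps)
    moreover have "real K \<le> (real K)\<^sup>2"
      by (cases K) (simp_all add: power2_eq_square)
    ultimately show ?thesis
      using drop_sum_ge_by_mean[OF that \<open>dest_prob = 1\<close>, of T] unfolding S_def by linarith
  qed
  then show ?thesis using that[of "pmf phi (j0, k0)"] arrival_pos by blast
qed

lemma long_run_drop_lower_bound:
  obtains c where "0 < c"
    and "\<And>K x0. x0 \<in> states K \<Longrightarrow> ereal (c / (2 * real K + 1)) \<le> long_run_drop phi u x0"
proof -
  obtain c where "0 < c" and c: "\<And>K x0 T. x0 \<in> states K \<Longrightarrow>
      c * real T - (real K)\<^sup>2 \<le> (2 * real K + 1) * (\<Sum>m<T. drop_prob phi u x0 (Suc m))"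
    using drop_sum_lower_bound by blast
  have "ereal (c / (2 * real K + 1)) \<le> long_run_drop phi u x0" if "x0 \<in> states K" for K x0
    unfolding long_run_drop_def
  proof (rule Liminf_average_ge[where b = "(real K)\<^sup>2 / (2 * real K + 1)"])
    fix T
    have "c / (2 * real K + 1) * real T - (real K)\<^sup>2 / (2 * real K + 1)
        = (c * real T - (real K)\<^sup>2) / (2 * real K + 1)"
      by (simp add: diff_divide_distrib)
    also have "\<dots> \<le> (\<Sum>m<T. drop_prob phi u x0 (Suc m))"
      using c[OF that, of T] by (simp add: divide_le_eq mult.commute)
    finally show "c / (2 * real K + 1) * real T - (real K)\<^sup>2 / (2 * real K + 1)
        \<le> (\<Sum>t = 1..T. drop_prob phi u x0 t)"
      by (simp add: sum.atLeast1_atMost_eq)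
  qed
  then show ?thesis using that \<open>0 < c\<close> by simp
qed

end

lemma long_run_drop_le_1: "long_run_drop phi u x0 \<le> 1"
proof -
  have "(\<Sum>t=1..T. drop_prob phi u x0 t) \<le> real T" for T
    using sum_mono[of "{1..T}" "\<lambda>t. drop_prob phi u x0 t" "\<lambda>_. 1"] by (simp add: drop_prob_def)
  then have "ereal ((\<Sum>t=1..T. drop_prob phi u x0 t) / real T) \<le> 1" for T
    by (cases "T = 0") (simp_all add: divide_le_eq)
  then have "long_run_drop phi u x0 \<le> Liminf sequentially (\<lambda>_. 1)"
    unfolding long_run_drop_def by (intro Liminf_mono) simp
  then show ?thesis by (simp add: Liminf_const)
qed

lemma P_drop_bounds:
  fixes phi :: "('d \<times> 's::finite) pmf"
  assumes "\<And>x0. x0 \<in> states K \<Longrightarrow> ereal a \<le> long_run_drop phi u x0"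
  shows "a \<le> P_drop phi u K" and "P_drop phi u K \<le> 1"
proof -
  define I where "I = (INF x0\<in>states K. long_run_drop phi u x0)"
  have "(\<lambda>i. if i = undefined then K else 0) \<in> states K"
    by (simp add: states_def)
  then have "I \<le> 1"
    unfolding I_def by (rule INF_lower2) (rule long_run_drop_le_1)
  moreover have "ereal a \<le> I"
    unfolding I_def using assms by (rule INF_greatest)
  ultimately show "a \<le> P_drop phi u K" and "P_drop phi u K \<le> 1"
    unfolding P_drop_def I_def[symmetric] by (cases I; simp)+
qed

theorem proposition2:
  fixes E :: "('s::finite \<times> 'd::finite) set"
    and phi :: "('d \<times> 's) pmf"
    and u :: "'d \<Rightarrow> 's \<Rightarrow> nat \<Rightarrow> 's option pmf"
  assumes "assumption_A E phi"
    and "state_indep_policy E u"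
  shows "(\<lambda>K. P_drop phi u K) \<in> \<Omega>(\<lambda>K. 1 / (real K)^2)
       \<and> (- Liminf sequentially (\<lambda>K. ereal (ln (P_drop phi u K) / real K)) = 0)"
proof -
  obtain j0 k0 where "k0 \<notin> nbhd E j0" and "0 < pmf phi (j0, k0)"
    using assms(1) unfolding assumption_A_def by blast
  then interpret incompatible_destination E phi u j0 k0
    using assms(2) by unfold_locales
  obtain c where "0 < c"
    and "\<And>K x0. x0 \<in> states K \<Longrightarrow> ereal (c / (2 * real K + 1)) \<le> long_run_drop phi u x0"
    using long_run_drop_lower_bound by blast
  then have lower: "c / (2 * real K + 1) \<le> P_drop phi u K" and upper: "P_drop phi u K \<le> 1" for K
    using P_drop_bounds by blast+
  have "(\<lambda>K. ln (P_drop phi u K) / real K) \<longlonglongrightarrow> 0"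
    using \<open>0 < c\<close> lower upper by (rule ln_over_n_tendsto_0_of_bounds)
  then have "Liminf sequentially (\<lambda>K. ereal (ln (P_drop phi u K) / real K)) = 0"
    by (intro lim_imp_Liminf) (auto intro: tendsto_ereal simp: zero_ereal_def)
  moreover have "(\<lambda>K. P_drop phi u K) \<in> \<Omega>(\<lambda>K. 1 / (real K)^2)"
    using \<open>0 < c\<close> lower by (rule bigomega_inverse_square_of_ge)
  ultimately show ?thesis by simp
qed

end
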